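(* Let $G$ and $K$ be finite sets, let $\beta:G\rightarrow K$ be a surjective function, let $U\subseteq\Lambda^G$ be such that $\Xi_\beta(U)=\Lambda^K$, and let $f:G\rightarrow\mathbb R^+$ and $f^*:K\rightarrow\mathbb R^+$ be such that $f$ is thematically mean invariant with respect to $f^*$ on $U$ under $\beta$, i.e. for all $p\in U$ and all $k\in K$, $\mathcal E_f(\mathcal C_\beta(p,k))=f^*(k)$. Then for every $p\in U$, \[\Xi_\beta(\mathcal S_f p)=\mathcal S_{f^*}(\Xi_\beta p).\]
   Context: $\mathbb R^+$ denotes the positive reals. For a set $X$, $\Lambda^X$ is the set of functions $p:X\rightarrow[0,1]$ with $\sum_{x\in X}p(x)=1$. For $\beta:G\rightarrow K$ and $k\in K$, $\langle k\rangle_\beta=\{x\in G\mid \beta(x)=k\}$, and $\Xi_\beta:\Lambda^G\rightarrow\Lambda^K$ is $(\Xi_\beta p)(k)=\sum_{x\in\langle k\rangle_\beta}p(x)$; $\Xi_\beta(U)=\{\Xi_\beta p\mid p\in U\}$. For a finite set $X$ and $f:X\rightarrow\mathbb R^+$, $\mathcal E_f(p)=\sum_{x\in X}f(x)p(x)$ (defined also for the zero function $p$), and $\mathcal S_f:\Lambda^X\rightarrow\Lambda^X$ is $(\mathcal S_fp)(x)=f(x)p(x)/\mathcal E_f(p)$. For $p\in\Lambda^G$ and $k\in K$, $\mathcal C_\beta(p,k):G\rightarrow[0,1]$ is given by $(\mathcal C_\beta(p,k))(x)=p(x)/(\Xi_\beta p)(k)$ if $\beta(x)=k$ and $(\Xi_\beta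 p)(k)>0$, and $0$ otherwise. *)

theory Defs
  imports "HOL-Analysis.Analysis"
begin

text \<open>Probability vectors on a finite set X, represented extensionally as
  functions that vanish outside X.\<close>
definition Lambda :: "'a set \<Rightarrow> ('a \<Rightarrow> real) set" where
  "Lambda X = {p. (\<forall>x\<in>X. 0 \<le> p x \<and> p x \<le> 1) \<and> (\<forall>x. x \<notin> X \<longrightarrow> p x = 0)
                 \<and> (\<Sum>x\<in>X. p x) = 1}"

definition fibre :: "'a set \<Rightarrow> ('a \<Rightarrow> 'b) \<Rightarrow> 'b \<Rightarrow> 'a set" where
  "fibre G \<beta> k = {x\<in>G. \<beta> x = k}"

definition Xi :: "'a set \<Rightarrow> 'b set \<Rightarrow> ('a \<Rightarrow> 'b) \<Rightarrow> ('a \<Rightarrow> real) \<Rightarrow> ('b \<Rightarrow> real)" where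
  "Xi G K \<beta> p = (\<lambda>k. if k \<in> K then (\<Sum>x\<in>fibre G \<beta> k. p x) else 0)"

definition Ef :: "'a set \<Rightarrow> ('a \<Rightarrow> real) \<Rightarrow> ('a \<Rightarrow> real) \<Rightarrow> real" where
  "Ef X f p = (\<Sum>x\<in>X. f x * p x)"

definition Sf :: "'a set \<Rightarrow> ('a \<Rightarrow> real) \<Rightarrow> ('a \<Rightarrow> real) \<Rightarrow> ('a \<Rightarrow> real)" where
  "Sf X f p = (\<lambda>x. if x \<in> X then f x * p x / Ef X f p else 0)"

definition Cond :: "'a set \<Rightarrow> 'b set \<Rightarrow> ('a \<Rightarrow> 'b) \<Rightarrow> ('a \<Rightarrow> real) \<Rightarrow> 'b \<Rightarrow> ('a \<Rightarrow> real)" where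
  "Cond G K \<beta> p k = (\<lambda>x. if x \<in> G \<and> \<beta> x = k \<and> Xi G K \<beta> p k > 0
                         then p x / Xi G K \<beta> p k else 0)"

end

theory Submission
  imports Defs
begin

text \<open>On the fibre over k, the fibre mass (Xi p)(k) times the conditional mean
  E_f(C(p,k)) is the f-weighted fibre mass; under mean invariance the latter is
  therefore fstar(k) (Xi p)(k). Summing over k gives E_f(p) = E_fstar(Xi p), and
  dividing the fibrewise identity by it is the claim.\<close>

lemma finite_fibre: "finite G \<Longrightarrow> finite (fibre G \<beta> k)"
  unfolding fibre_def by simp

lemma sum_over_fibres:
  assumes "finite G" "finite K" "\<beta> ` G \<subseteq> K"
  shows "(\<Sum>x\<in>G. g x) = (\<Sum>k\<in>K. \<Sum>x\<in>fibre G \<beta> k. g x)"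
  unfolding fibre_def by (rule sum.group[OF assms, symmetric])

lemma Xi_mult_Ef_Cond:
  assumes "finite G" "k \<in> K" "\<forall>x\<in>G. 0 \<le> p x"
  shows "Xi G K \<beta> p k * Ef G f (Cond G K \<beta> p k) = (\<Sum>x\<in>fibre G \<beta> k. f x * p x)"
proof -
  have mass: "Xi G K \<beta> p k = (\<Sum>x\<in>fibre G \<beta> k. p x)"
    using \<open>k \<in> K\<close> unfolding Xi_def by simp
  have fibre_nonneg: "\<forall>x\<in>fibre G \<beta> k. 0 \<le> p x"
    using assms(3) unfolding fibre_def by auto
  show ?thesis
  proof (cases "Xi G K \<beta> p k > 0")
    case True
    have "Ef G f (Cond G K \<beta> p k) = (\<Sum>x\<in>fibre G \<beta> k. f x * p x / Xi G K \<beta> p k)"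
      unfolding Ef_def Cond_def fibre_def using True \<open>finite G\<close>
      by (simp add: sum.inter_filter[symmetric] if_distrib cong: if_cong)
    then show ?thesis
      using True by (simp add: sum_divide_distrib[symmetric])
  next
    case False
    moreover have "0 \<le> Xi G K \<beta> p k"
      unfolding mass using fibre_nonneg by (simp add: sum_nonneg)
    ultimately have "Xi G K \<beta> p k = 0" by simp
    then have "\<forall>x\<in>fibre G \<beta> k. p x = 0"
      using mass fibre_nonneg sum_nonneg_eq_0_iff[OF finite_fibre[OF \<open>finite G\<close>]] by metis
    with \<open>Xi G K \<beta> p k = 0\<close> show ?thesis by simp
  qed
qed

lemma Xi_Sf:
  assumes "k \<in> K"
  shows "Xi G K \<beta> (Sf G f p) k = (\<Sum>x\<in>fibre G \<beta> k. f x * p x) / Ef G f p"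
  using assms unfolding Xi_def Sf_def fibre_def
  by (simp add: sum_divide_distrib[symmetric])

lemma Xi_Sf_eq_Sf_Xi_if_mean_invariant:
  assumes "finite G" "finite K" "\<beta> ` G \<subseteq> K" "\<forall>x\<in>G. 0 \<le> p x"
    and mean_invariant: "\<forall>k\<in>K. Ef G f (Cond G K \<beta> p k) = fstar k"
  shows "Xi G K \<beta> (Sf G f p) = Sf K fstar (Xi G K \<beta> p)"
proof
  fix k
  have fibre_mean: "(\<Sum>x\<in>fibre G \<beta> k. f x * p x) = fstar k * Xi G K \<beta> p k"
    if "k \<in> K" for k
    using Xi_mult_Ef_Cond[OF \<open>finite G\<close> that assms(4), where \<beta>=\<beta> and f=f] mean_invariant that
    by (simp add: mult.commute)
  have "Ef G f p = (\<Sum>k\<in>K. \<Sum>x\<in>fibre G \<beta> k. f x * p x)"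
    unfolding Ef_def using sum_over_fibres[OF assms(1-3)] .
  also have "\<dots> = Ef K fstar (Xi G K \<beta> p)"
    unfolding Ef_def using fibre_mean by simp
  finally have mean: "Ef G f p = Ef K fstar (Xi G K \<beta> p)" .
  show "Xi G K \<beta> (Sf G f p) k = Sf K fstar (Xi G K \<beta> p) k"
  proof (cases "k \<in> K")
    case True
    then show ?thesis
      by (simp add: Xi_Sf fibre_mean mean) (simp add: Sf_def)
  qed (simp add: Xi_def Sf_def)
qed

theorem corollary1:
  fixes G :: "'a set" and K :: "'b set" and \<beta> :: "'a \<Rightarrow> 'b"
    and U :: "('a \<Rightarrow> real) set" and f :: "'a \<Rightarrow> real" and fstar :: "'b \<Rightarrow> real"
  assumes "finite G" and "finite K"
    and "\<beta> ` G = K"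
    and "U \<subseteq> Lambda G"
    and "Xi G K \<beta> ` U = Lambda K"
    and "\<forall>x\<in>G. f x > 0" and "\<forall>k\<in>K. fstar k > 0"
    and "\<forall>p\<in>U. \<forall>k\<in>K. Ef G f (Cond G K \<beta> p k) = fstar k"
  shows "\<forall>p\<in>U. Xi G K \<beta> (Sf G f p) = Sf K fstar (Xi G K \<beta> p)"
proof
  fix p assume "p \<in> U"
  then have "\<forall>x\<in>G. 0 \<le> p x"
    using \<open>U \<subseteq> Lambda G\<close> unfolding Lambda_def by auto
  with assms(1-3,8) \<open>p \<in> U\<close> show "Xi G K \<beta> (Sf G f p) = Sf K fstar (Xi G K \<beta> p)"
    by (intro Xi_Sf_eq_Sf_Xi_if_mean_invariant) auto
qed

end
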